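(* For $L>0$, $n\in\mathbb N$ and $p_1,\dots,p_{n+1}\in\Lambda_L^*$, $$\mathbf E_L\Big(\prod_{j=1}^n\hat V_L(p_j-p_{j+1})\Big)=\sum_{A\in\mathcal A_n}\prod_{a\in A}\Big\{m_{|a|}\,\delta_{*,L}\Big(\sum_{l\in a}(p_l-p_{l+1})\Big)\prod_{l\in a}\hat B_\#(p_l-p_{l+1})\Big\}.$$
   Context: $\Lambda_L=[-L/2,L/2)^d$, $\Lambda_L^*=(\frac1L\mathbb Z)^d$. For $h:\mathbb R^d\to\mathbb C$, $h_\#$ is the $L$-periodic extension of $h|_{\Lambda_L}$; for $f$ on $\Lambda_L$, $\hat f(p)=\int_{\Lambda_L}e^{-2\pi ip\cdot x}f(x)dx$. $B$ is a real Schwartz function on $\mathbb R^d$. $M$ Poisson with mean $|\Lambda_L|$, $y_{L,\gamma}$ i.i.d. uniform on $\Lambda_L$, $v_\gamma$ i.i.d. real with all moments $m_k=\mathbf E v_\gamma^k$ finite, all independent; $V_L(x)=\sum_{\gamma=1}^Mv_\gamma B_\#(x-y_{L,\gamma})$, $\hat V_L$ its Fourier coefficients, $\mathbf E_L$ joint expectation. $\mathcal A_n$ is the set of partitions of $\{1,\dots,n\}$; $\delta_{*,L}(u)=|\Lambda_L|$ if $u=0$, $0$ otherwise. *)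

theory Defs
  imports "HOL-Probability.Probability" "HOL-Library.Disjoint_Sets"
begin

definition box_L :: "real \<Rightarrow> (real^'d) set" where
  "box_L L = {x. \<forall>i. - L / 2 \<le> x $ i \<and> x $ i < L / 2}"

definition vol_L :: "real \<Rightarrow> 'd::finite itself \<Rightarrow> real" where
  "vol_L L _ = L ^ CARD('d)"

definition dual_lattice :: "real \<Rightarrow> (real^'d) set" where
  "dual_lattice L = {p. \<forall>i. \<exists>k::int. p $ i = of_int k / L}"

text \<open>L-periodic extension of h restricted to \<Lambda>_L.\<close>
definition per_ext :: "real \<Rightarrow> (real^'d \<Rightarrow> 'b) \<Rightarrow> real^'d \<Rightarrow> 'b" where
  "per_ext L h x = h (\<chi> i. x $ i - L * of_int \<lfloor>x $ i / L + 1 / 2\<rfloor>)"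

definition four_coef :: "real \<Rightarrow> (real^'d \<Rightarrow> complex) \<Rightarrow> real^'d \<Rightarrow> complex" where
  "four_coef L f p = (LINT x : box_L L | lborel.
      exp (- 2 * complex_of_real pi * \<i> * complex_of_real (p \<bullet> x)) * f x)"

definition delta_L :: "real \<Rightarrow> 'd::finite itself \<Rightarrow> real^'d \<Rightarrow> complex" where
  "delta_L L t u = (if u = 0 then complex_of_real (vol_L L t) else 0)"

definition partial_deriv :: "'d \<Rightarrow> (real^'d \<Rightarrow> real) \<Rightarrow> real^'d \<Rightarrow> real" where
  "partial_deriv i f x = deriv (\<lambda>t. f (x + t *\<^sub>R axis i 1)) 0"

fun iter_partial :: "'d list \<Rightarrow> (real^'d \<Rightarrow> real) \<Rightarrow> real^'d \<Rightarrow> real" where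
  "iter_partial [] f = f"
| "iter_partial (i # is) f = partial_deriv i (iter_partial is f)"

definition schwartz :: "(real^'d \<Rightarrow> real) \<Rightarrow> bool" where
  "schwartz f \<longleftrightarrow>
     (\<forall>is. continuous_on UNIV (iter_partial is f) \<and>
        (\<forall>i x. (\<lambda>t. iter_partial is f (x + t *\<^sub>R axis i 1)) differentiable (at 0)) \<and>
        (\<forall>k::nat. bounded (range (\<lambda>x. (1 + norm x) ^ k * iter_partial is f x))))"

text \<open>The random potential's Fourier coefficient for a configuration
  (m points, positions ys, couplings vs).\<close>
definition Vhat :: "real \<Rightarrow> (real^'d \<Rightarrow> real) \<Rightarrow> nat \<Rightarrow> (nat \<Rightarrow> real^'d) \<Rightarrow> (nat \<Rightarrow> real)
    \<Rightarrow> real^'d \<Rightarrow> complex" where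
  "Vhat L B m ys vs = four_coef L
     (\<lambda>x. complex_of_real (\<Sum>\<gamma>\<in>{1..m}. vs \<gamma> * per_ext L B (x - ys \<gamma>)))"

definition joint_law :: "real \<Rightarrow> 'd::finite itself \<Rightarrow> real measure
    \<Rightarrow> (nat \<times> (nat \<Rightarrow> real^'d) \<times> (nat \<Rightarrow> real)) measure" where
  "joint_law L t mu =
     measure_pmf (poisson_pmf (vol_L L t)) \<Otimes>\<^sub>M
     (Pi\<^sub>M UNIV (\<lambda>_. uniform_measure lborel (box_L L)) \<Otimes>\<^sub>M Pi\<^sub>M UNIV (\<lambda>_. mu))"

definition moment :: "real measure \<Rightarrow> nat \<Rightarrow> real" where
  "moment mu k = (\<integral>v. v ^ k \<partial>mu)"

end

theory Submission
  imports Defs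
begin

text \<open>
  Put q_j = p_j - p_(j+1) and e_u(y) = exp(-2 pi i u.y). Since the integral of an L-periodic
  function over the box is translation invariant, the Fourier coefficient of the translate
  B_#(. - y) at q is e_q(y) times that of B_#. Hence the product of the V^_L(q_j) is a sum over
  all maps g from {1..n} to the points of the products of v_g(j) e_(q_j)(y_g(j)) B^_#(q_j).
  Grouping the maps by the partition A of {1..n} into their level sets, independence of the
  points factorises the expectation into one factor m_|a| E[e_u(y)] prod B^_#(q_l) per block a,
  where u is the sum of the q_l over a. Exactly M(M-1)...(M-|A|+1) maps have level-set
  partition A, and this falling factorial has Poisson mean |Lambda_L|^|A|. Finally
  |Lambda_L| E[e_u(y)] = delta_{*,L}(u), since for u /= 0 a translation by half a period flips
  the sign of the character. Fubini is justified by dominating the integrand with the same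
  formula for the weights |v| and constant test functions.
\<close>

section \<open>Lattice translates of the box\<close>

definition int_lattice :: "(real^'d) set" where
  "int_lattice = {k. \<forall>i. k $ i \<in> \<int>}"

definition box_index :: "real \<Rightarrow> real^'d \<Rightarrow> real^'d" where
  "box_index L x = (\<chi> i. of_int \<lfloor>x $ i / L + 1 / 2\<rfloor>)"

definition lattice_periodic :: "real \<Rightarrow> (real^'d \<Rightarrow> 'b) \<Rightarrow> bool" where
  "lattice_periodic L h \<longleftrightarrow> (\<forall>x. \<forall>k\<in>int_lattice. h (x + L *\<^sub>R k) = h x)"

lemma int_latticeE:
  assumes "k \<in> int_lattice"
  obtains n :: int where "k $ i = of_int n"
  using assms unfolding int_lattice_def by (metis Ints_cases mem_Collect_eq)

lemma box_index_in_int_lattice: "box_index L x \<in> int_lattice"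
  unfolding int_lattice_def box_index_def by auto

lemma uminus_in_int_lattice: "k \<in> int_lattice \<Longrightarrow> - k \<in> int_lattice"
  unfolding int_lattice_def by auto

lemma sets_box_L [measurable]: "box_L L \<in> sets borel"
  unfolding box_L_def by measurable

lemma box_L_bounds:
  "box (\<chi> i. - L / 2) (\<chi> i. L / 2) \<subseteq> box_L L" "box_L L \<subseteq> cbox (\<chi> i. - L / 2) (\<chi> i. L / 2)"
  unfolding box_L_def by (auto simp: mem_box_cart less_imp_le)

lemma emeasure_box_L:
  assumes "L > 0"
  shows "emeasure lborel (box_L L :: (real^'d) set) = ennreal (L ^ CARD('d))"
proof -
  define a :: "real^'d" where "a = (\<chi> i. - L / 2)"
  define b :: "real^'d" where "b = (\<chi> i. L / 2)"
  have "(b - a) \<bullet> \<beta> = L" "a \<bullet> \<beta> \<le> b \<bullet> \<beta>" if "\<beta> \<in> Basis" for \<beta>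
    using that assms unfolding Basis_vec_def a_def b_def by (auto simp: cart_eq_inner_axis[symmetric])
  then have vol: "emeasure lborel (box a b) = ennreal (L ^ CARD('d))"
    "emeasure lborel (cbox a b) = ennreal (L ^ CARD('d))"
    by (simp_all add: emeasure_lborel_box_eq emeasure_lborel_cbox_eq)
  have "emeasure lborel (box a b) \<le> emeasure lborel (box_L L :: (real^'d) set)"
    unfolding a_def b_def by (rule emeasure_mono[OF box_L_bounds(1)]) simp
  moreover have "emeasure lborel (box_L L :: (real^'d) set) \<le> emeasure lborel (cbox a b)"
    unfolding a_def b_def by (rule emeasure_mono[OF box_L_bounds(2)]) simp
  ultimately show ?thesis by (simp add: vol antisym)
qed

lemma measure_box_L: "L > 0 \<Longrightarrow> measure lborel (box_L L :: (real^'d) set) = L ^ CARD('d)"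
  by (simp add: emeasure_box_L measure_def)

lemma box_translate_iff:
  assumes "L > 0" and "k \<in> int_lattice"
  shows "x - L *\<^sub>R k \<in> box_L L \<longleftrightarrow> k = box_index L x"
proof -
  have "(- L / 2 \<le> x $ i - L * k $ i \<and> x $ i - L * k $ i < L / 2)
        \<longleftrightarrow> k $ i = of_int \<lfloor>x $ i / L + 1 / 2\<rfloor>" for i
  proof -
    obtain n where n: "k $ i = of_int n" using assms(2) by (rule int_latticeE)
    have "(- L / 2 \<le> x $ i - L * k $ i \<and> x $ i - L * k $ i < L / 2) \<longleftrightarrow>
          (of_int n \<le> x $ i / L + 1 / 2 \<and> x $ i / L + 1 / 2 < of_int n + 1)"
      using assms(1) unfolding n by (auto simp: field_simps)
    also have "\<dots> \<longleftrightarrow> \<lfloor>x $ i / L + 1 / 2\<rfloor> = n" by (simp add: floor_eq_iff)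
    finally show ?thesis unfolding n by auto
  qed
  then show ?thesis unfolding box_L_def box_index_def vec_eq_iff by auto
qed

lemma box_index_translate:
  assumes "L \<noteq> 0" and "k \<in> int_lattice"
  shows "box_index L (x + L *\<^sub>R k) = box_index L x + k"
proof -
  have "\<lfloor>(x $ i + L * k $ i) / L + 1 / 2\<rfloor> = \<lfloor>x $ i / L + 1 / 2\<rfloor> + k $ i" for i
  proof -
    obtain n where n: "k $ i = of_int n" using assms(2) by (rule int_latticeE)
    have "(x $ i + L * k $ i) / L + 1 / 2 = (x $ i / L + 1 / 2) + of_int n"
      using assms(1) by (simp add: n field_simps)
    then show ?thesis by (metis floor_add_int n of_int_add)
  qed
  then show ?thesis unfolding box_index_def by (simp add: vec_eq_iff)
qed

lemma per_ext_eq: "per_ext L h x = h (x - L *\<^sub>R box_index L x)"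
  unfolding per_ext_def box_index_def by (rule arg_cong[where f = h]) (simp add: vec_eq_iff)

lemma lattice_periodic_per_ext: "L \<noteq> 0 \<Longrightarrow> lattice_periodic L (per_ext L h)"
  unfolding lattice_periodic_def per_ext_eq by (simp add: box_index_translate algebra_simps)

lemma borel_measurable_vec_lambda:
  fixes f :: "'a \<Rightarrow> 'd::finite \<Rightarrow> real"
  assumes "\<And>i. (\<lambda>x. f x i) \<in> borel_measurable M"
  shows "(\<lambda>x. \<chi> i. f x i) \<in> borel_measurable M"
proof (subst borel_measurable_euclidean_space, intro ballI)
  fix b :: "real^'d" assume "b \<in> Basis"
  then obtain j where "b = axis j 1" unfolding Basis_vec_def by auto
  then have "(\<lambda>x. (\<chi> i. f x i) \<bullet> b) = (\<lambda>x. f x j)"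
    by (simp add: cart_eq_inner_axis[symmetric])
  then show "(\<lambda>x. (\<chi> i. f x i) \<bullet> b) \<in> borel_measurable M" using assms by simp
qed

lemma borel_measurable_box_index [measurable]:
  "box_index L \<in> borel_measurable (borel :: (real^'d) measure)"
  unfolding box_index_def[abs_def] by (intro borel_measurable_vec_lambda) measurable

lemma borel_measurable_per_ext [measurable]:
  fixes h :: "real^'d \<Rightarrow> 'b::topological_space"
  assumes [measurable]: "h \<in> borel_measurable borel"
  shows "per_ext L h \<in> borel_measurable borel"
  unfolding per_ext_eq[abs_def] by measurable

lemma norm_per_ext_le: "(\<And>x. norm (h x) \<le> C) \<Longrightarrow> norm (per_ext L h x) \<le> C"
  unfolding per_ext_def by simp

lemma lborel_integral_translate:
  fixes f :: "'a::euclidean_space \<Rightarrow> 'b::{banach, second_countable_topology}"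
  assumes [measurable]: "f \<in> borel_measurable borel"
  shows "(\<integral>x. f x \<partial>lborel) = (\<integral>x. f (x + c) \<partial>lborel)"
proof -
  have "(\<integral>x. f x \<partial>lborel) = (\<integral>x. f x \<partial>distr lborel borel ((+) c))"
    by (simp add: lborel_distr_plus)
  also have "\<dots> = (\<integral>x. f (c + x) \<partial>lborel)"
    by (rule integral_distr) auto
  finally show ?thesis by (simp add: add.commute)
qed

lemma emeasure_box_L_finite: "emeasure lborel (box_L L :: (real^'d) set) < \<infinity>"
proof -
  have "emeasure lborel (box_L L :: (real^'d) set) \<le> emeasure lborel (cbox (\<chi> i. - L / 2) (\<chi> i::'d. L / 2))"
    by (rule emeasure_mono[OF box_L_bounds(2)]) simp
  also have "\<dots> < \<infinity>" by (simp add: emeasure_lborel_cbox_eq)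
  finally show ?thesis .
qed

lemma set_integrable_box_L_bounded:
  fixes f :: "real^'d \<Rightarrow> 'b::{banach, second_countable_topology}"
  assumes [measurable]: "f \<in> borel_measurable borel" and "\<And>x. norm (f x) \<le> C"
  shows "set_integrable lborel (box_L L) f"
  unfolding set_integrable_def
proof (rule Bochner_Integration.integrable_bound[where f = "\<lambda>x. indicator (box_L L) x * C"])
  show "integrable lborel (\<lambda>x. indicator (box_L L) x * C)"
    by (intro integrable_mult_left integrable_real_indicator) (use emeasure_box_L_finite in simp_all)
  show "AE x in lborel. norm (indicator (box_L L) x *\<^sub>R f x) \<le> norm (indicator (box_L L) x * C)"
    using assms(2) by (auto split: split_indicator intro: order_trans[OF _ abs_ge_self])
qed measurable

lemma finite_int_lattice_bounded: "finite {k::real^'d. k \<in> int_lattice \<and> (\<forall>i. \<bar>k $ i\<bar> \<le> N)}"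
proof -
  define S where "S = (of_int :: int \<Rightarrow> real) ` {-\<lceil>N\<rceil>..\<lceil>N\<rceil>}"
  have "k $ i \<in> S" if k: "k \<in> int_lattice" and bounded: "\<forall>i. \<bar>k $ i\<bar> \<le> N"
    for k :: "real^'d" and i
  proof -
    obtain n where n: "k $ i = of_int n" using k by (rule int_latticeE)
    then have "n \<in> {-\<lceil>N\<rceil>..\<lceil>N\<rceil>}"
      using bounded[rule_format, of i] by (simp add: abs_le_iff) linarith
    then show ?thesis unfolding S_def n by auto
  qed
  then have "{k::real^'d. k \<in> int_lattice \<and> (\<forall>i. \<bar>k $ i\<bar> \<le> N)} \<subseteq> vec_lambda ` (UNIV \<rightarrow>\<^sub>E S)"
    by (auto intro!: image_eqI[where x = "vec_nth _"])
  moreover have "finite (vec_lambda ` (UNIV \<rightarrow>\<^sub>E S) :: (real^'d) set)"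
    unfolding S_def by (intro finite_imageI finite_PiE) auto
  ultimately show ?thesis by (rule finite_subset)
qed

lemma box_index_bounded:
  assumes "L > 0" and "x \<in> box_L L" and "norm s \<le> r"
  shows "\<bar>box_index L (x + s) $ i\<bar> \<le> r / L + 2"
proof -
  define v where "v = (x $ i + s $ i) / L + 1 / 2"
  have "- L / 2 \<le> x $ i" "x $ i < L / 2" using assms(2) unfolding box_L_def by auto
  moreover have "\<bar>s $ i\<bar> \<le> r" using assms(3) component_le_norm_cart[of s i] by linarith
  ultimately have "\<bar>x $ i + s $ i\<bar> \<le> L / 2 + r" by (simp add: abs_le_iff)
  then have "\<bar>(x $ i + s $ i) / L\<bar> \<le> (L / 2 + r) / L"
    using assms(1) by (simp add: abs_divide divide_right_mono)
  also have "\<dots> = 1 / 2 + r / L" using assms(1) by (simp add: field_simps)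
  finally have "\<bar>v\<bar> \<le> r / L + 1" unfolding v_def by linarith
  moreover have "box_index L (x + s) $ i = of_int \<lfloor>v\<rfloor>" unfolding box_index_def v_def by simp
  ultimately show ?thesis by (simp add: abs_le_iff) linarith
qed

lemma box_index_window:
  assumes "L > 0"
  obtains K where "finite K" and "K \<subseteq> int_lattice" and "uminus ` K = K"
    and "\<And>x s. x \<in> box_L L \<Longrightarrow> norm s \<le> r \<Longrightarrow> box_index L (x - s) \<in> K"
proof
  define K :: "(real^'d) set" where "K = {k. k \<in> int_lattice \<and> (\<forall>i. \<bar>k $ i\<bar> \<le> r / L + 2)}"
  show "finite K" unfolding K_def by (rule finite_int_lattice_bounded)
  show "K \<subseteq> int_lattice" unfolding K_def by blast
  show "uminus ` K = K"
    unfolding K_def using uminus_in_int_lattice by (auto intro!: image_eqI[where x = "- _"])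
  show "box_index L (x - s) \<in> K" if "x \<in> box_L L" and "norm s \<le> r" for x s
    using box_index_bounded[OF assms that(1), of "- s" r] that(2) box_index_in_int_lattice
    unfolding K_def by auto
qed

lemma sum_indicator_box_translates:
  assumes "L > 0" and "finite K" and "K \<subseteq> int_lattice" and "box_index L z \<in> K"
  shows "(\<Sum>k\<in>K. indicator (box_L L) (z - L *\<^sub>R k)) = (1::real)"
proof -
  have "(\<Sum>k\<in>K. indicator (box_L L) (z - L *\<^sub>R k))
      = (\<Sum>k\<in>K. if k = box_index L z then 1 else (0::real))"
    using box_translate_iff[OF assms(1)] assms(3) by (intro sum.cong) (auto split: split_indicator)
  also have "\<dots> = 1" using assms(2,4) by simp
  finally show ?thesis .
qed

lemma integral_box_split_translates:
  fixes f :: "real^'d \<Rightarrow> 'b::{banach, second_countable_topology}"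
  assumes L: "L > 0" and K: "finite K" "K \<subseteq> int_lattice"
    and index: "\<And>x. x \<in> box_L L \<Longrightarrow> box_index L (x - s) \<in> K"
    and integrable: "\<And>k. integrable lborel
      (\<lambda>x. indicator (box_L L) x *\<^sub>R (indicator (box_L L) (x - s - L *\<^sub>R k) *\<^sub>R f x))"
  shows "(\<integral>x. indicator (box_L L) x *\<^sub>R f x \<partial>lborel)
       = (\<Sum>k\<in>K. \<integral>x. indicator (box_L L) x *\<^sub>R (indicator (box_L L) (x - s - L *\<^sub>R k) *\<^sub>R f x) \<partial>lborel)"
proof -
  have "indicator (box_L L) x *\<^sub>R f x
      = (\<Sum>k\<in>K. indicator (box_L L) x *\<^sub>R (indicator (box_L L) (x - s - L *\<^sub>R k) *\<^sub>R f x))" for x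
  proof (cases "x \<in> box_L L")
    case True
    then have "(\<Sum>k\<in>K. indicator (box_L L) (x - s - L *\<^sub>R k)) = (1::real)"
      by (intro sum_indicator_box_translates[OF L K index])
    then have "indicator (box_L L) x *\<^sub>R f x
        = indicator (box_L L) x *\<^sub>R ((\<Sum>k\<in>K. indicator (box_L L) (x - s - L *\<^sub>R k)) *\<^sub>R f x)"
      by simp
    then show ?thesis by (simp only: scaleR_sum_left scaleR_sum_right)
  qed simp
  then show ?thesis
    using integrable by (simp add: Bochner_Integration.integral_sum del: scaleR_scaleR)
qed

lemma set_integral_box_translate:
  fixes h :: "real^'d \<Rightarrow> 'b::{banach, second_countable_topology}"
  assumes L: "L > 0" and [measurable]: "h \<in> borel_measurable borel"
    and bounded: "\<And>x. norm (h x) \<le> C" and periodic: "lattice_periodic L h"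
  shows "(LINT x : box_L L | lborel. h (x - y)) = (LINT x : box_L L | lborel. h x)"
proof -
  define W :: "real^'d \<Rightarrow> real" where "W = indicator (box_L L)"
  have [measurable]: "W \<in> borel_measurable borel" unfolding W_def by measurable
  obtain K :: "(real^'d) set" where K: "finite K" "K \<subseteq> int_lattice" "uminus ` K = K"
    and index: "\<And>x s. x \<in> box_L L \<Longrightarrow> norm s \<le> norm y \<Longrightarrow> box_index L (x - s) \<in> K"
    using box_index_window[OF L, where r = "norm y"] by blast
  have integrable: "integrable lborel (\<lambda>x. W x *\<^sub>R (W (x - c) *\<^sub>R h (x - d)))" for c d
    using set_integrable_box_L_bounded[of "\<lambda>x. W (x - c) *\<^sub>R h (x - d)" C L] bounded
      order_trans[OF norm_ge_zero bounded]
    unfolding set_integrable_def W_def by (simp add: indicator_def)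
  have flip: "(\<Sum>k\<in>K. F k) = (\<Sum>k\<in>K. F (- k))" for F :: "real^'d \<Rightarrow> 'b"
    using sum.reindex[of uminus K F] K(3) by (simp add: inj_on_def comp_def)
  have "(LINT x : box_L L | lborel. h (x - y))
      = (\<Sum>k\<in>K. \<integral>x. W x *\<^sub>R (W (x - y - L *\<^sub>R k) *\<^sub>R h (x - y)) \<partial>lborel)"
    unfolding set_lebesgue_integral_def W_def using index[of _ y] integrable[unfolded W_def]
    by (intro integral_box_split_translates[OF L K(1,2)]) (auto simp: diff_diff_eq)
  also have "\<dots> = (\<Sum>k\<in>K. \<integral>x. W x *\<^sub>R (W (x + y + L *\<^sub>R k) *\<^sub>R h x) \<partial>lborel)"
  proof (rule sum.cong[OF refl])
    fix k assume "k \<in> K"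
    then have "h (x + L *\<^sub>R k) = h x" for x using K(2) periodic unfolding lattice_periodic_def by blast
    then show "(\<integral>x. W x *\<^sub>R (W (x - y - L *\<^sub>R k) *\<^sub>R h (x - y)) \<partial>lborel)
        = (\<integral>x. W x *\<^sub>R (W (x + y + L *\<^sub>R k) *\<^sub>R h x) \<partial>lborel)"
      by (subst lborel_integral_translate[where c = "y + L *\<^sub>R k"]) (simp_all add: algebra_simps)
  qed
  also have "\<dots> = (\<Sum>k\<in>K. \<integral>x. W x *\<^sub>R (W (x - - y - L *\<^sub>R k) *\<^sub>R h x) \<partial>lborel)"
    by (subst flip) simp
  also have "\<dots> = (LINT x : box_L L | lborel. h x)"
  proof -
    have "integrable lborel (\<lambda>x. W x *\<^sub>R (W (x + y - L *\<^sub>R k) *\<^sub>R h x))" for k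
      using integrable[of "L *\<^sub>R k - y" 0] by (simp add: algebra_simps)
    then show ?thesis
      unfolding set_lebesgue_integral_def W_def using index[of _ "- y"]
      by (intro integral_box_split_translates[symmetric, OF L K(1,2)]) auto
  qed
  finally show ?thesis .
qed

section \<open>Fourier characters\<close>

lemma dual_lattice_diff:
  assumes "u \<in> dual_lattice L" and "v \<in> dual_lattice L"
  shows "u - v \<in> dual_lattice L"
  unfolding dual_lattice_def mem_Collect_eq
proof
  fix i
  obtain a b :: int where "u $ i = of_int a / L" and "v $ i = of_int b / L"
    using assms unfolding dual_lattice_def by blast
  then have "(u - v) $ i = of_int (a - b) / L" by (simp add: diff_divide_distrib)
  then show "\<exists>k::int. (u - v) $ i = of_int k / L" ..
qed

lemma dual_lattice_add:
  assumes "u \<in> dual_lattice L" and "v \<in> dual_lattice L"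
  shows "u + v \<in> dual_lattice L"
  unfolding dual_lattice_def mem_Collect_eq
proof
  fix i
  obtain a b :: int where "u $ i = of_int a / L" and "v $ i = of_int b / L"
    using assms unfolding dual_lattice_def by blast
  then have "(u + v) $ i = of_int (a + b) / L" by (simp add: add_divide_distrib)
  then show "\<exists>k::int. (u + v) $ i = of_int k / L" ..
qed

lemma zero_in_dual_lattice: "0 \<in> dual_lattice L"
  unfolding dual_lattice_def by (auto intro: exI[of _ 0])

lemma dual_lattice_sum: "(\<And>j. j \<in> A \<Longrightarrow> u j \<in> dual_lattice L) \<Longrightarrow> (\<Sum>j\<in>A. u j) \<in> dual_lattice L"
  by (induction A rule: infinite_finite_induct) (auto simp: dual_lattice_add zero_in_dual_lattice)

lemma inner_dual_lattice_int_lattice: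
  assumes "L \<noteq> 0" and "u \<in> dual_lattice L" and "k \<in> int_lattice"
  shows "u \<bullet> (L *\<^sub>R k) \<in> \<int>"
proof -
  have "u $ i * (L * k $ i) \<in> \<int>" for i
  proof -
    obtain n :: int where n: "u $ i = of_int n / L" using assms(2) unfolding dual_lattice_def by auto
    obtain m :: int where m: "k $ i = of_int m" using assms(3) by (rule int_latticeE)
    have "u $ i * (L * k $ i) = of_int (n * m)" using assms(1) unfolding n m by simp
    then show ?thesis by simp
  qed
  then show ?thesis unfolding inner_vec_def by (auto intro: Ints_sum)
qed

definition four_char :: "real^'d \<Rightarrow> real^'d \<Rightarrow> complex" where
  "four_char u x = exp (- 2 * complex_of_real pi * \<i> * complex_of_real (u \<bullet> x))"

lemma four_coef_eq_set_integral: "four_coef L f p = (LINT x : box_L L | lborel. four_char p x * f x)"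
  unfolding four_coef_def four_char_def ..

lemma four_char_add: "four_char u (x + y) = four_char u x * four_char u y"
  unfolding four_char_def by (simp add: inner_add_right distrib_left exp_add[symmetric])

lemma four_char_add_left: "four_char (u + v) x = four_char u x * four_char v x"
  unfolding four_char_def by (simp add: inner_add_left distrib_left exp_add[symmetric])

lemma four_char_zero [simp]: "four_char 0 x = 1"
  unfolding four_char_def by simp

lemma norm_four_char [simp]: "norm (four_char u x) = 1"
  unfolding four_char_def by (simp add: norm_exp_eq_Re)

lemma prod_four_char: "finite A \<Longrightarrow> (\<Prod>j\<in>A. four_char (u j) x) = four_char (\<Sum>j\<in>A. u j) x"
  by (induction A rule: finite_induct) (auto simp: four_char_add_left)

lemma borel_measurable_four_char [measurable]: "four_char u \<in> borel_measurable borel"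
  unfolding four_char_def[abs_def] by (intro borel_measurable_continuous_onI continuous_intros)

lemma lattice_periodic_four_char:
  fixes u :: "real^'d"
  assumes "L \<noteq> 0" and "u \<in> dual_lattice L"
  shows "lattice_periodic L (four_char u)"
  unfolding lattice_periodic_def
proof (intro allI ballI)
  fix x and k :: "real^'d" assume "k \<in> int_lattice"
  then have "- (u \<bullet> (L *\<^sub>R k)) \<in> \<int>" using inner_dual_lattice_int_lattice[OF assms] by simp
  from exp_integer_2pi[OF this] have "four_char u (L *\<^sub>R k) = 1"
    unfolding four_char_def by (simp add: algebra_simps)
  then show "four_char u (x + L *\<^sub>R k) = four_char u x" by (simp add: four_char_add)
qed

lemma set_integral_box_four_char:
  fixes u :: "real^'d"
  assumes L: "L > 0" and u: "u \<in> dual_lattice L"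
  shows "(LINT x : box_L L | lborel. four_char u x) = delta_L L TYPE('d) u"
proof (cases "u = 0")
  case True
  then have "(LINT x : box_L L | lborel. four_char u x) = measure lborel (box_L L :: (real^'d) set) *\<^sub>R 1"
    using emeasure_box_L_finite[of L, where 'd = 'd] by (simp add: set_integral_const)
  then show ?thesis using True L by (simp add: measure_box_L delta_L_def vol_L_def scaleR_conv_of_real)
next
  case False
  define y where "y = (1 / (2 * (u \<bullet> u))) *\<^sub>R u"
  have uy: "u \<bullet> y = 1 / 2" using False unfolding y_def by (simp add: inner_commute)
  have "four_char u (- y) = - 1" unfolding four_char_def inner_minus_right uy by simp
  then have half_period: "four_char u (x - y) = - four_char u x" for x
    using four_char_add[of u x "- y"] by simp
  have "(LINT x : box_L L | lborel. four_char u (x - y)) = (LINT x : box_L L | lborel. four_char u x)"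
    by (rule set_integral_box_translate[OF L _ _ lattice_periodic_four_char[OF _ u], where C = 1]) (use L in auto)
  then have "(LINT x : box_L L | lborel. four_char u x) = 0"
    unfolding half_period set_lebesgue_integral_def by simp
  then show ?thesis using False unfolding delta_L_def by simp
qed

lemma four_coef_translate:
  fixes f :: "real^'d \<Rightarrow> complex"
  assumes L: "L > 0" and q: "q \<in> dual_lattice L" and [measurable]: "f \<in> borel_measurable borel"
    and bounded: "\<And>x. norm (f x) \<le> C" and periodic: "lattice_periodic L f"
  shows "four_coef L (\<lambda>x. f (x - y)) q = four_char q y * four_coef L f q"
proof -
  define h where "h x = four_char q x * f x" for x
  have "h \<in> borel_measurable borel" unfolding h_def[abs_def] by measurable
  moreover have "norm (h x) \<le> C" for x unfolding h_def using bounded by (simp add: norm_mult)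
  moreover have "lattice_periodic L h"
    using periodic lattice_periodic_four_char[OF _ q] L unfolding lattice_periodic_def h_def by simp
  ultimately have shift: "(LINT x : box_L L | lborel. h (x - y)) = (LINT x : box_L L | lborel. h x)"
    by (rule set_integral_box_translate[OF L])
  have "four_char q x * f (x - y) = four_char q y * h (x - y)" for x
    using four_char_add[of q "x - y" y] unfolding h_def by simp
  then have "four_coef L (\<lambda>x. f (x - y)) q = four_char q y * (LINT x : box_L L | lborel. h (x - y))"
    unfolding four_coef_eq_set_integral by simp
  also have "\<dots> = four_char q y * four_coef L f q"
    by (simp only: shift) (simp add: four_coef_eq_set_integral h_def)
  finally show ?thesis .
qed

section \<open>Level-set partitions\<close>

definition fibre :: "'a set \<Rightarrow> ('a \<Rightarrow> 'b) \<Rightarrow> 'b \<Rightarrow> 'a set" where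
  "fibre J g \<gamma> = {j \<in> J. g j = \<gamma>}"

definition level_partition :: "'a set \<Rightarrow> ('a \<Rightarrow> 'b) \<Rightarrow> 'a set set" where
  "level_partition J g = fibre J g ` g ` J"

definition partition_block :: "'a set set \<Rightarrow> 'a \<Rightarrow> 'a set" where
  "partition_block A j = (THE a. a \<in> A \<and> j \<in> a)"

lemma partition_on_level_partition: "partition_on J (level_partition J g)"
  unfolding partition_on_def level_partition_def fibre_def disjoint_def by auto

lemma partition_on_block_nonempty:
  assumes "partition_on J A" and "a \<in> A"
  obtains j where "j \<in> a" and "j \<in> J"
proof -
  from partition_onD3[OF assms(1)] assms(2) obtain j where "j \<in> a" by (metis ex_in_conv)
  moreover from this have "j \<in> J" using partition_onD1[OF assms(1)] assms(2) by blast
  ultimately show thesis using that by blast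
qed

lemma partition_block_eq:
  assumes "partition_on J A" and "a \<in> A" and "j \<in> a"
  shows "partition_block A j = a"
  unfolding partition_block_def using assms
  by (intro the_equality) (auto simp: partition_on_def disjoint_def)

lemma partition_block_in:
  assumes "partition_on J A" and "j \<in> J"
  shows "partition_block A j \<in> A" and "j \<in> partition_block A j"
  using assms partition_block_eq[OF assms(1)] unfolding partition_on_def by auto

lemma prod_fibres:
  fixes c :: "'a set \<Rightarrow> 'c::comm_monoid_mult"
  assumes "finite S" and "g ` J \<subseteq> S" and "c {} = 1"
  shows "(\<Prod>\<gamma>\<in>S. c (fibre J g \<gamma>)) = (\<Prod>a\<in>level_partition J g. c a)"
proof -
  have "fibre J g \<gamma> = {}" if "\<gamma> \<notin> g ` J" for \<gamma> using that unfolding fibre_def by auto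
  then have "(\<Prod>\<gamma>\<in>S. c (fibre J g \<gamma>)) = (\<Prod>\<gamma>\<in>g ` J. c (fibre J g \<gamma>))"
    using assms by (intro prod.mono_neutral_right) auto
  also have "\<dots> = (\<Prod>a\<in>level_partition J g. c a)"
    unfolding level_partition_def
    by (rule prod.reindex[symmetric, unfolded comp_def]) (auto simp: inj_on_def fibre_def set_eq_iff)
  finally show ?thesis .
qed

lemma level_partition_restrict_block:
  assumes A: "partition_on J A" and f: "inj_on f A"
  shows "level_partition J (\<lambda>j\<in>J. f (partition_block A j)) = A"
proof -
  define g where "g = (\<lambda>j\<in>J. f (partition_block A j))"
  have "g ` J = f ` A"
  proof
    show "g ` J \<subseteq> f ` A" unfolding g_def using partition_block_in[OF A] by auto
    show "f ` A \<subseteq> g ` J"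
    proof
      fix x assume "x \<in> f ` A"
      then obtain a where a: "a \<in> A" "x = f a" by blast
      moreover obtain j where "j \<in> a" "j \<in> J" using partition_on_block_nonempty[OF A a(1)] .
      ultimately show "x \<in> g ` J" unfolding g_def using partition_block_eq[OF A] by force
    qed
  qed
  moreover have "fibre J g (f a) = a" if "a \<in> A" for a
  proof -
    have "j \<in> fibre J g (f a) \<longleftrightarrow> j \<in> a" for j
      using partition_block_in[OF A, of j] partition_block_eq[OF A that, of j] that f
        A[unfolded partition_on_def]
      unfolding fibre_def g_def inj_on_def by auto
    then show ?thesis by auto
  qed
  ultimately show ?thesis
    unfolding level_partition_def g_def[symmetric] by (simp add: image_image cong: image_cong)
qed

lemma inj_on_restrict_block:
  assumes A: "partition_on J A"
  shows "inj_on (\<lambda>f. \<lambda>j\<in>J. f (partition_block A j)) (A \<rightarrow>\<^sub>E S)"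
proof (rule inj_onI)
  fix f1 f2 assume f: "f1 \<in> A \<rightarrow>\<^sub>E S" "f2 \<in> A \<rightarrow>\<^sub>E S"
    and eq: "(\<lambda>j\<in>J. f1 (partition_block A j)) = (\<lambda>j\<in>J. f2 (partition_block A j))"
  show "f1 = f2"
  proof (rule extensionalityI[where A = A])
    fix a assume a: "a \<in> A"
    then obtain j where "j \<in> a" "j \<in> J" by (rule partition_on_block_nonempty[OF A])
    then show "f1 a = f2 a" using fun_cong[OF eq, of j] partition_block_eq[OF A a] by simp
  qed (use f in \<open>auto simp: PiE_def\<close>)
qed

lemma level_partition_eqD:
  assumes A: "partition_on J A" and g: "g \<in> J \<rightarrow>\<^sub>E S" and kernel: "level_partition J g = A"
  obtains f where "f \<in> A \<rightarrow>\<^sub>E S" and "inj_on f A" and "g = (\<lambda>j\<in>J. f (partition_block A j))"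
proof
  have block: "a = fibre J g (g j)" if "a \<in> A" and "j \<in> a" for a j
    using that kernel unfolding level_partition_def fibre_def by auto
  define f where "f = (\<lambda>a\<in>A. g (SOME j. j \<in> a))"
  have some_in: "(SOME j. j \<in> a) \<in> a" if "a \<in> A" for a
    using partition_onD3[OF A] that by (auto simp: some_in_eq)
  then have f_block: "a = fibre J g (f a)" if "a \<in> A" for a
    using block that unfolding f_def by simp
  show "f \<in> A \<rightarrow>\<^sub>E S"
    using g some_in A unfolding f_def partition_on_def by fastforce
  show "inj_on f A" by (rule inj_onI) (metis f_block)
  show "g = (\<lambda>j\<in>J. f (partition_block A j))"
  proof (rule extensionalityI[where A = J])
    fix j assume "j \<in> J"
    then have "j \<in> fibre J g (f (partition_block A j))"
      using f_block partition_block_in[OF A] by blast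
    then show "g j = (\<lambda>j\<in>J. f (partition_block A j)) j" unfolding fibre_def by simp
  qed (use g in \<open>auto simp: PiE_def\<close>)
qed

lemma fact_mult_binomial: "fact k * (n choose k) = (\<Prod>i = 0..<k. n - i)"
proof (induction k arbitrary: n)
  case (Suc k)
  show ?case
  proof (cases n)
    case (Suc m)
    have "fact (Suc k) * (n choose Suc k) = Suc m * (fact k * (m choose k))"
      using Suc_times_binomial_eq[of m k] unfolding Suc by (simp add: algebra_simps)
    also have "\<dots> = (\<Prod>i = 0..<Suc k. n - i)"
      unfolding Suc.IH Suc by (simp add: prod.atLeast0_lessThan_Suc_shift del: prod.op_ivl_Suc)
    finally show ?thesis .
  qed simp
qed simp

lemma card_level_partition_eq:
  assumes J: "finite J" and S: "finite S" and A: "partition_on J A"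
  shows "card {g \<in> J \<rightarrow>\<^sub>E S. level_partition J g = A} = fact (card A) * (card S choose card A)"
proof -
  define \<Phi> where "\<Phi> f = (\<lambda>j\<in>J. f (partition_block A j))" for f :: "'a set \<Rightarrow> 'b"
  have "{g \<in> J \<rightarrow>\<^sub>E S. level_partition J g = A} = \<Phi> ` {f \<in> A \<rightarrow>\<^sub>E S. inj_on f A}"
  proof
    show "{g \<in> J \<rightarrow>\<^sub>E S. level_partition J g = A} \<subseteq> \<Phi> ` {f \<in> A \<rightarrow>\<^sub>E S. inj_on f A}"
      unfolding \<Phi>_def by (force elim: level_partition_eqD[OF A])
    show "\<Phi> ` {f \<in> A \<rightarrow>\<^sub>E S. inj_on f A} \<subseteq> {g \<in> J \<rightarrow>\<^sub>E S. level_partition J g = A}"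
      unfolding \<Phi>_def using level_partition_restrict_block[OF A] partition_block_in[OF A] by fastforce
  qed
  moreover have "inj_on \<Phi> {f \<in> A \<rightarrow>\<^sub>E S. inj_on f A}"
    unfolding \<Phi>_def by (rule inj_on_subset[OF inj_on_restrict_block[OF A]]) auto
  moreover have "card {f \<in> A \<rightarrow>\<^sub>E S. inj_on f A} = fact (card A) * (card S choose card A)"
    using card_inj_on_subset_funcset[OF finite_elements[OF J A] S subset_refl]
    by (simp add: fact_mult_binomial)
  ultimately show ?thesis by (simp add: card_image)
qed

lemma sum_prod_fibres:
  fixes c :: "'a set \<Rightarrow> 'c::comm_semiring_1"
  assumes J: "finite J" and S: "finite S" and "c {} = 1"
  shows "(\<Sum>g\<in>J \<rightarrow>\<^sub>E S. \<Prod>\<gamma>\<in>S. c (fibre J g \<gamma>))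
       = (\<Sum>A\<in>{P. partition_on J P}. of_nat (fact (card A) * (card S choose card A)) * (\<Prod>a\<in>A. c a))"
proof -
  have "(\<Sum>g\<in>J \<rightarrow>\<^sub>E S. \<Prod>\<gamma>\<in>S. c (fibre J g \<gamma>)) = (\<Sum>g\<in>J \<rightarrow>\<^sub>E S. \<Prod>a\<in>level_partition J g. c a)"
    using prod_fibres[where c = c, OF S _ assms(3)] by (intro sum.cong) auto
  also have "\<dots> = (\<Sum>A\<in>{P. partition_on J P}. \<Sum>g\<in>{g \<in> J \<rightarrow>\<^sub>E S. level_partition J g = A}. \<Prod>a\<in>A. c a)"
    by (subst sum.group[symmetric, where g = "level_partition J"])
       (auto simp: J S finite_PiE finitely_many_partition_on partition_on_level_partition
             intro!: sum.cong)
  also have "\<dots> = (\<Sum>A\<in>{P. partition_on J P}. of_nat (fact (card A) * (card S choose card A)) * (\<Prod>a\<in>A. c a))"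
    using card_level_partition_eq[OF J S] by (intro sum.cong) auto
  finally show ?thesis .
qed

section \<open>Poisson factorial moments and product integrals\<close>

lemma poisson_factorial_moment_sums:
  assumes "0 < rate"
  shows "(\<lambda>m. pmf (poisson_pmf rate) m * real (fact k * (m choose k))) sums (rate ^ k)"
proof -
  have shifted: "pmf (poisson_pmf rate) (i + k) * real (fact k * ((i + k) choose k))
      = rate ^ k * exp (- rate) * (rate ^ i / fact i)" for i
  proof -
    have "fact k * ((i + k) choose k) * fact i = (fact (i + k) :: nat)"
      using binomial_fact_lemma[of k "i + k"] by (simp add: ac_simps)
    then have "real (fact k * ((i + k) choose k)) * fact i = fact (i + k)"
      by (metis of_nat_fact of_nat_mult)
    then have "real (fact k * ((i + k) choose k)) = fact (i + k) / fact i"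
      by (simp add: eq_divide_eq)
    then show ?thesis using assms by (simp add: power_add)
  qed
  have "(\<lambda>i. rate ^ k * exp (- rate) * (rate ^ i / fact i)) sums (rate ^ k * exp (- rate) * exp rate)"
    using exp_converges[of rate] by (intro sums_mult) (simp add: divide_inverse mult.commute)
  moreover have "rate ^ k * exp (- rate) * exp rate = rate ^ k" by (simp add: exp_minus)
  ultimately have "(\<lambda>i. pmf (poisson_pmf rate) (i + k) * real (fact k * ((i + k) choose k))) sums (rate ^ k)"
    unfolding shifted by simp
  then show ?thesis by (subst (asm) sums_zero_iff_shift) auto
qed

lemma poisson_factorial_moment:
  assumes "0 < rate"
  shows "integrable (measure_pmf (poisson_pmf rate)) (\<lambda>m. real (fact k * (m choose k)))"
    and "(\<integral>m. real (fact k * (m choose k)) \<partial>measure_pmf (poisson_pmf rate)) = rate ^ k"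
proof -
  have "(\<integral>\<^sup>+ m. ennreal (real (fact k * (m choose k))) \<partial>measure_pmf (poisson_pmf rate))
      = (\<Sum>m. ennreal (pmf (poisson_pmf rate) m * real (fact k * (m choose k))))"
    unfolding nn_integral_measure_pmf nn_integral_count_space_nat[symmetric] by (simp add: ennreal_mult')
  also have "\<dots> = ennreal (rate ^ k)"
    using poisson_factorial_moment_sums[OF assms, of k] assms
    by (subst sums_ennreal[THEN iffD2, THEN sums_unique, symmetric]) auto
  finally have nn: "(\<integral>\<^sup>+ m. ennreal (real (fact k * (m choose k))) \<partial>measure_pmf (poisson_pmf rate)) = ennreal (rate ^ k)" .
  then show "integrable (measure_pmf (poisson_pmf rate)) (\<lambda>m. real (fact k * (m choose k)))"
    by (subst integrable_iff_bounded) auto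
  show "(\<integral>m. real (fact k * (m choose k)) \<partial>measure_pmf (poisson_pmf rate)) = rate ^ k"
    using nn assms by (subst integral_eq_nn_integral) auto
qed

lemma integral_pair_measure_mult:
  fixes f :: "'a \<Rightarrow> 'c::{real_normed_field, banach, second_countable_topology}" and g :: "'b \<Rightarrow> 'c"
  assumes "sigma_finite_measure M1" and "sigma_finite_measure M2"
    and f: "integrable M1 f" and g: "integrable M2 g"
  shows "integrable (M1 \<Otimes>\<^sub>M M2) (\<lambda>(x, y). f x * g y)"
    and "(\<integral>z. (case z of (x, y) \<Rightarrow> f x * g y) \<partial>(M1 \<Otimes>\<^sub>M M2)) = integral\<^sup>L M1 f * integral\<^sup>L M2 g"
proof -
  interpret pair_sigma_finite M1 M2 using assms(1,2) by (rule pair_sigma_finite.intro)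
  have [measurable]: "f \<in> borel_measurable M1" "g \<in> borel_measurable M2" using f g by auto
  show int: "integrable (M1 \<Otimes>\<^sub>M M2) (\<lambda>(x, y). f x * g y)"
  proof (rule Fubini_integrable)
    have "(\<lambda>x. \<integral>y. norm (f x * g y) \<partial>M2) = (\<lambda>x. norm (f x) * (\<integral>y. norm (g y) \<partial>M2))"
      by (simp add: norm_mult)
    then show "integrable M1 (\<lambda>x. \<integral>y. norm (case (x, y) of (x, y) \<Rightarrow> f x * g y) \<partial>M2)"
      using f by (simp add: integrable_mult_left integrable_norm)
  qed (use g in simp_all)
  show "(\<integral>z. (case z of (x, y) \<Rightarrow> f x * g y) \<partial>(M1 \<Otimes>\<^sub>M M2)) = integral\<^sup>L M1 f * integral\<^sup>L M2 g"
    using integral_fst'[OF int] by simp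
qed

lemma integral_PiM_prod:
  fixes f :: "'i \<Rightarrow> 'a \<Rightarrow> 'c::{real_normed_field, banach, second_countable_topology}"
  assumes "prob_space M" and S: "finite S" and f: "\<And>i. i \<in> S \<Longrightarrow> integrable M (f i)"
  shows "integrable (PiM UNIV (\<lambda>_. M)) (\<lambda>x. \<Prod>i\<in>S. f i (x i))"
    and "(\<integral>x. (\<Prod>i\<in>S. f i (x i)) \<partial>PiM UNIV (\<lambda>_. M)) = (\<Prod>i\<in>S. integral\<^sup>L M (f i))"
proof -
  interpret product_prob_space "\<lambda>_. M" UNIV
    using assms(1) by (simp add: product_prob_space_def product_prob_space_axioms_def
        product_sigma_finite_def prob_space_imp_sigma_finite)
  define h where "h x = (\<Prod>i\<in>S. f i (x i))" for x
  have h_meas: "h \<in> borel_measurable (PiM S (\<lambda>_. M))"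
    unfolding h_def using f by (intro borel_measurable_prod) (auto intro!: measurable_PiM_component_rev)
  have restrict_meas: "(\<lambda>x. restrict x S) \<in> measurable (PiM UNIV (\<lambda>_. M)) (PiM S (\<lambda>_. M))"
    by (rule measurable_restrict_subset) simp
  have distr: "distr (PiM UNIV (\<lambda>_. M)) (PiM S (\<lambda>_. M)) (\<lambda>x. restrict x S) = PiM S (\<lambda>_. M)"
    by (rule distr_PiM_restrict_finite[OF S]) simp
  have eq: "(\<lambda>x. \<Prod>i\<in>S. f i (x i)) = (\<lambda>x. h (restrict x S))"
    unfolding h_def by (intro ext prod.cong) auto
  have "integrable (PiM S (\<lambda>_. M)) h"
    unfolding h_def by (rule product_integrable_prod[OF S f])
  then show "integrable (PiM UNIV (\<lambda>_. M)) (\<lambda>x. \<Prod>i\<in>S. f i (x i))"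
    unfolding eq using integrable_distr_eq[OF restrict_meas h_meas] distr by simp
  show "(\<integral>x. (\<Prod>i\<in>S. f i (x i)) \<partial>PiM UNIV (\<lambda>_. M)) = (\<Prod>i\<in>S. integral\<^sup>L M (f i))"
  proof -
    have "(\<integral>x. h (restrict x S) \<partial>PiM UNIV (\<lambda>_. M)) = integral\<^sup>L (PiM S (\<lambda>_. M)) h"
      using integral_distr[OF restrict_meas h_meas] distr by simp
    also have "\<dots> = (\<Prod>i\<in>S. integral\<^sup>L M (f i))"
      unfolding h_def by (rule product_integral_prod[OF S f])
    finally show ?thesis unfolding eq .
  qed
qed

lemma borel_measurable_pair_measure_pmf:
  fixes f :: "nat \<times> 'b \<Rightarrow> 'c::topological_space"
  assumes "\<And>m. (\<lambda>z. f (m, z)) \<in> borel_measurable N"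
  shows "f \<in> borel_measurable (measure_pmf p \<Otimes>\<^sub>M N)"
proof -
  have "f \<in> borel_measurable (count_space UNIV \<Otimes>\<^sub>M N)"
    by (rule measurable_pair_measure_countable1) (use assms in auto)
  moreover have "sets (measure_pmf p \<Otimes>\<^sub>M N) = sets (count_space UNIV \<Otimes>\<^sub>M N)"
    by (rule sets_pair_measure_cong) simp_all
  ultimately show ?thesis
    using measurable_cong_sets[of "measure_pmf p \<Otimes>\<^sub>M N" "count_space UNIV \<Otimes>\<^sub>M N" borel borel] by simp
qed

lemma integral_uniform_measure:
  fixes f :: "'a \<Rightarrow> 'b::{banach, second_countable_topology}"
  assumes [measurable]: "A \<in> sets M" and "emeasure M A \<noteq> 0" and "emeasure M A \<noteq> \<infinity>"
    and [measurable]: "f \<in> borel_measurable M"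
  shows "(\<integral>x. f x \<partial>uniform_measure M A) = (1 / measure M A) *\<^sub>R (LINT x : A | M. f x)"
proof -
  have finite: "emeasure M A \<noteq> \<top>" using assms(3) by simp
  then have "0 < measure M A"
    using assms(2) by (simp add: emeasure_eq_ennreal_measure zero_less_measure_iff)
  then have "uniform_measure M A = density M (\<lambda>x. ennreal (indicator A x / measure M A))"
    unfolding uniform_measure_def emeasure_eq_ennreal_measure[OF finite]
    by (intro density_cong) (auto simp: divide_ennreal[symmetric] ennreal_indicator)
  then have "(\<integral>x. f x \<partial>uniform_measure M A) = (\<integral>x. (indicator A x / measure M A) *\<^sub>R f x \<partial>M)"
    using assms(1) by (simp add: integral_density)
  then show ?thesis
    unfolding set_lebesgue_integral_def by (simp add: divide_inverse mult.commute flip: integral_scaleR_right)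
qed

section \<open>Moments of marked Poisson statistics\<close>

definition iid_law :: "'y measure \<Rightarrow> 'm measure \<Rightarrow> ((nat \<Rightarrow> 'y) \<times> (nat \<Rightarrow> 'm)) measure" where
  "iid_law U mu = PiM UNIV (\<lambda>_. U) \<Otimes>\<^sub>M PiM UNIV (\<lambda>_. mu)"

definition block_moment ::
    "'y measure \<Rightarrow> 'm measure \<Rightarrow> ('j \<Rightarrow> 'y \<Rightarrow> complex) \<Rightarrow> ('m \<Rightarrow> real) \<Rightarrow> 'j set \<Rightarrow> complex" where
  "block_moment U mu \<phi> w a = complex_of_real (\<integral>v. w v ^ card a \<partial>mu) * (\<integral>y. (\<Prod>j\<in>a. \<phi> j y) \<partial>U)"

lemma prob_space_iid_law: "prob_space U \<Longrightarrow> prob_space mu \<Longrightarrow> prob_space (iid_law U mu)"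
  unfolding iid_law_def by (intro prob_space_pair prob_space_PiM) auto

lemma block_moment_empty: "prob_space U \<Longrightarrow> prob_space mu \<Longrightarrow> block_moment U mu \<phi> w {} = 1"
  unfolding block_moment_def by (simp add: prob_space.prob_space)

locale marked_statistic =
  fixes U :: "'y measure" and mu :: "'m measure" and \<phi> :: "'j \<Rightarrow> 'y \<Rightarrow> complex"
    and w :: "'m \<Rightarrow> real" and J :: "'j set" and C :: real
  assumes prob_U: "prob_space U" and prob_mu: "prob_space mu"
    and \<phi>_measurable: "\<And>j. j \<in> J \<Longrightarrow> \<phi> j \<in> borel_measurable U"
    and \<phi>_bounded: "\<And>j y. j \<in> J \<Longrightarrow> norm (\<phi> j y) \<le> C" and C_nonneg: "0 \<le> C"
    and w_measurable: "w \<in> borel_measurable mu"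
    and w_moments: "\<And>k. integrable mu (\<lambda>v. w v ^ k)"
    and finite_J: "finite J"
begin

lemma integrable_prod_\<phi>:
  assumes "I \<subseteq> J"
  shows "integrable U (\<lambda>y. \<Prod>j\<in>I. \<phi> j y)"
proof -
  interpret U: prob_space U by (rule prob_U)
  have "norm (\<Prod>j\<in>I. \<phi> j y) \<le> (\<Prod>j\<in>I. C)" for y
    unfolding prod_norm[symmetric] using assms \<phi>_bounded by (intro prod_mono) auto
  then have "AE y in U. norm (\<Prod>j\<in>I. \<phi> j y) \<le> C ^ card I" by simp
  moreover have "(\<lambda>y. \<Prod>j\<in>I. \<phi> j y) \<in> borel_measurable U"
    using assms \<phi>_measurable by (intro borel_measurable_prod) auto
  ultimately show ?thesis by (intro U.integrable_const_bound)
qed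

lemma integral_iid_assignment:
  fixes g :: "'j \<Rightarrow> nat"
  assumes S: "finite S" and g: "g ` J \<subseteq> S"
  shows "integrable (iid_law U mu) (\<lambda>(ys, vs). \<Prod>j\<in>J. complex_of_real (w (vs (g j))) * \<phi> j (ys (g j)))"
    and "(\<integral>z. (case z of (ys, vs) \<Rightarrow> \<Prod>j\<in>J. complex_of_real (w (vs (g j))) * \<phi> j (ys (g j))) \<partial>iid_law U mu)
         = (\<Prod>\<gamma>\<in>S. block_moment U mu \<phi> w (fibre J g \<gamma>))"
proof -
  define \<Phi> where "\<Phi> \<gamma> y = (\<Prod>j\<in>fibre J g \<gamma>. \<phi> j y)" for \<gamma> y
  define W where "W \<gamma> v = complex_of_real (w v ^ card (fibre J g \<gamma>))" for \<gamma> v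
  have factor: "(\<Prod>j\<in>J. complex_of_real (w (vs (g j))) * \<phi> j (ys (g j)))
      = (\<Prod>\<gamma>\<in>S. \<Phi> \<gamma> (ys \<gamma>)) * (\<Prod>\<gamma>\<in>S. W \<gamma> (vs \<gamma>))" for ys vs
  proof -
    have "(\<Prod>j\<in>J. complex_of_real (w (vs (g j))) * \<phi> j (ys (g j)))
        = (\<Prod>\<gamma>\<in>S. \<Prod>j | j \<in> J \<and> g j = \<gamma>. complex_of_real (w (vs (g j))) * \<phi> j (ys (g j)))"
      by (rule prod.group[symmetric, OF finite_J S g])
    also have "\<dots> = (\<Prod>\<gamma>\<in>S. \<Prod>j\<in>fibre J g \<gamma>. complex_of_real (w (vs \<gamma>)) * \<phi> j (ys \<gamma>))"
      unfolding fibre_def by (intro prod.cong refl) auto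
    finally show ?thesis unfolding \<Phi>_def W_def by (simp add: prod.distrib mult.commute)
  qed
  have fibre_J: "fibre J g \<gamma> \<subseteq> J" for \<gamma> unfolding fibre_def by auto
  have "prob_space (PiM UNIV (\<lambda>_::nat. U))" "prob_space (PiM UNIV (\<lambda>_::nat. mu))"
    using prob_U prob_mu by (auto intro: prob_space_PiM)
  note pair = integral_pair_measure_mult[OF this[THEN prob_space_imp_sigma_finite]]
  have "integrable U (\<Phi> \<gamma>)" for \<gamma> unfolding \<Phi>_def using integrable_prod_\<phi>[OF fibre_J] by simp
  note positions = integral_PiM_prod[OF prob_U S this]
  have "integrable mu (W \<gamma>)" for \<gamma> unfolding W_def by (rule integrable_of_real[OF w_moments])
  note marks = integral_PiM_prod[OF prob_mu S this]
  show "integrable (iid_law U mu) (\<lambda>(ys, vs). \<Prod>j\<in>J. complex_of_real (w (vs (g j))) * \<phi> j (ys (g j)))"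
    unfolding factor iid_law_def using pair(1)[OF positions(1) marks(1)] by simp
  have "(\<integral>z. (case z of (ys, vs) \<Rightarrow> \<Prod>j\<in>J. complex_of_real (w (vs (g j))) * \<phi> j (ys (g j))) \<partial>iid_law U mu)
      = (\<Prod>\<gamma>\<in>S. integral\<^sup>L U (\<Phi> \<gamma>)) * (\<Prod>\<gamma>\<in>S. integral\<^sup>L mu (W \<gamma>))"
    unfolding factor iid_law_def using pair(2)[OF positions(1) marks(1)] positions(2) marks(2)
    by (simp add: case_prod_beta')
  also have "\<dots> = (\<Prod>\<gamma>\<in>S. block_moment U mu \<phi> w (fibre J g \<gamma>))"
    unfolding prod.distrib[symmetric] block_moment_def \<Phi>_def W_def
    by (simp add: mult.commute del: of_real_power)
  finally show "(\<integral>z. (case z of (ys, vs) \<Rightarrow> \<Prod>j\<in>J. complex_of_real (w (vs (g j))) * \<phi> j (ys (g j))) \<partial>iid_law U mu)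
      = (\<Prod>\<gamma>\<in>S. block_moment U mu \<phi> w (fibre J g \<gamma>))" .
qed

lemma integral_iid_statistic:
  assumes S: "finite S"
  shows "integrable (iid_law U mu) (\<lambda>(ys, vs). \<Prod>j\<in>J. \<Sum>\<gamma>\<in>S. complex_of_real (w (vs \<gamma>)) * \<phi> j (ys \<gamma>))"
    and "(\<integral>z. (case z of (ys, vs) \<Rightarrow> \<Prod>j\<in>J. \<Sum>\<gamma>\<in>S. complex_of_real (w (vs \<gamma>)) * \<phi> j (ys \<gamma>)) \<partial>iid_law U mu)
         = (\<Sum>A\<in>{P. partition_on J P}. of_nat (fact (card A) * (card S choose card A))
              * (\<Prod>a\<in>A. block_moment U mu \<phi> w a))"
proof -
  define F where "F g = (\<lambda>(ys, vs). \<Prod>j\<in>J. complex_of_real (w (vs (g j))) * \<phi> j (ys (g j)))"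
    for g :: "'j \<Rightarrow> nat"
  have expand: "(\<lambda>(ys, vs). \<Prod>j\<in>J. \<Sum>\<gamma>\<in>S. complex_of_real (w (vs \<gamma>)) * \<phi> j (ys \<gamma>))
      = (\<lambda>z. \<Sum>g\<in>J \<rightarrow>\<^sub>E S. F g z)"
    unfolding F_def by (auto simp: prod_sum_PiE[OF finite_J S])
  have F: "integrable (iid_law U mu) (F g)" "integral\<^sup>L (iid_law U mu) (F g) = (\<Prod>\<gamma>\<in>S. block_moment U mu \<phi> w (fibre J g \<gamma>))"
    if "g \<in> J \<rightarrow>\<^sub>E S" for g
    using integral_iid_assignment[OF S, of g] that unfolding F_def by (auto simp: case_prod_beta')
  show "integrable (iid_law U mu) (\<lambda>(ys, vs). \<Prod>j\<in>J. \<Sum>\<gamma>\<in>S. complex_of_real (w (vs \<gamma>)) * \<phi> j (ys \<gamma>))"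
    unfolding expand using F(1) by (intro Bochner_Integration.integrable_sum)
  have "(\<integral>z. (case z of (ys, vs) \<Rightarrow> \<Prod>j\<in>J. \<Sum>\<gamma>\<in>S. complex_of_real (w (vs \<gamma>)) * \<phi> j (ys \<gamma>)) \<partial>iid_law U mu)
      = (\<Sum>g\<in>J \<rightarrow>\<^sub>E S. \<Prod>\<gamma>\<in>S. block_moment U mu \<phi> w (fibre J g \<gamma>))"
    unfolding expand using F by (simp add: Bochner_Integration.integral_sum)
  also have "\<dots> = (\<Sum>A\<in>{P. partition_on J P}. of_nat (fact (card A) * (card S choose card A))
              * (\<Prod>a\<in>A. block_moment U mu \<phi> w a))"
    by (rule sum_prod_fibres[where c = "block_moment U mu \<phi> w", OF finite_J S block_moment_empty[OF prob_U prob_mu]])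
  finally show "(\<integral>z. (case z of (ys, vs) \<Rightarrow> \<Prod>j\<in>J. \<Sum>\<gamma>\<in>S. complex_of_real (w (vs \<gamma>)) * \<phi> j (ys \<gamma>)) \<partial>iid_law U mu)
      = (\<Sum>A\<in>{P. partition_on J P}. of_nat (fact (card A) * (card S choose card A))
              * (\<Prod>a\<in>A. block_moment U mu \<phi> w a))" .
qed

lemma marked_statistic_abs: "marked_statistic U mu (\<lambda>j y. complex_of_real C) (\<lambda>v. \<bar>w v\<bar>) J C"
proof (rule marked_statistic.intro)
  show "(\<lambda>v. \<bar>w v\<bar>) \<in> borel_measurable mu" using w_measurable by (rule borel_measurable_abs)
  show "integrable mu (\<lambda>v. \<bar>w v\<bar> ^ k)" for k
    using integrable_abs[OF w_moments[of k]] by (simp add: power_abs)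
qed (use prob_U prob_mu C_nonneg finite_J in auto)

lemma norm_statistic_le:
  "norm (\<Prod>j\<in>J. \<Sum>\<gamma>\<in>S. complex_of_real (w (vs \<gamma>)) * \<phi> j (ys \<gamma>)) \<le> (\<Prod>j\<in>J. \<Sum>\<gamma>\<in>S. \<bar>w (vs \<gamma>)\<bar> * C)"
proof -
  have "norm (\<Sum>\<gamma>\<in>S. complex_of_real (w (vs \<gamma>)) * \<phi> j (ys \<gamma>)) \<le> (\<Sum>\<gamma>\<in>S. \<bar>w (vs \<gamma>)\<bar> * C)"
    if "j \<in> J" for j
    using \<phi>_bounded[OF that] by (intro order_trans[OF norm_sum] sum_mono) (simp add: norm_mult mult_left_mono)
  then show ?thesis unfolding prod_norm[symmetric] by (intro prod_mono) auto
qed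

lemma integral_dominating_statistic:
  assumes S: "finite S"
  shows "integrable (iid_law U mu) (\<lambda>(ys, vs). \<Prod>j\<in>J. \<Sum>\<gamma>\<in>S. \<bar>w (vs \<gamma>)\<bar> * C)"
    and "(\<integral>z. (case z of (ys, vs) \<Rightarrow> \<Prod>j\<in>J. \<Sum>\<gamma>\<in>S. \<bar>w (vs \<gamma>)\<bar> * C) \<partial>iid_law U mu)
       \<le> (\<Sum>A\<in>{P. partition_on J P}. real (fact (card A) * (card S choose card A))
            * norm (\<Prod>a\<in>A. block_moment U mu (\<lambda>j y. complex_of_real C) (\<lambda>v. \<bar>w v\<bar>) a))"
proof -
  interpret abs: marked_statistic U mu "\<lambda>j y. complex_of_real C" "\<lambda>v. \<bar>w v\<bar>" J C
    by (rule marked_statistic_abs)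
  define G :: "(nat \<Rightarrow> 'y) \<times> (nat \<Rightarrow> 'm) \<Rightarrow> real" where "G = (\<lambda>(ys, vs). \<Prod>j\<in>J. \<Sum>\<gamma>\<in>S. \<bar>w (vs \<gamma>)\<bar> * C)"
  have G_complex: "(\<lambda>z. complex_of_real (G z))
      = (\<lambda>(ys, vs). \<Prod>j\<in>J. \<Sum>\<gamma>\<in>S. complex_of_real \<bar>w (vs \<gamma>)\<bar> * complex_of_real C)"
    unfolding G_def by (auto simp: of_real_prod of_real_sum)
  have "integrable (iid_law U mu) (\<lambda>z. complex_of_real (G z))"
    unfolding G_complex by (rule abs.integral_iid_statistic(1)[OF S])
  from integrable_Re[OF this] show "integrable (iid_law U mu) (\<lambda>(ys, vs). \<Prod>j\<in>J. \<Sum>\<gamma>\<in>S. \<bar>w (vs \<gamma>)\<bar> * C)"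
    by (simp add: G_def)
  have G_integral: "complex_of_real (integral\<^sup>L (iid_law U mu) G)
      = (\<Sum>A\<in>{P. partition_on J P}. of_nat (fact (card A) * (card S choose card A))
           * (\<Prod>a\<in>A. block_moment U mu (\<lambda>j y. complex_of_real C) (\<lambda>v. \<bar>w v\<bar>) a))"
    (is "_ = (\<Sum>A\<in>_. ?t A)")
    using abs.integral_iid_statistic(2)[OF S] unfolding G_complex[symmetric] by simp
  have "integral\<^sup>L (iid_law U mu) G \<le> norm (complex_of_real (integral\<^sup>L (iid_law U mu) G))"
    by simp
  also have "\<dots> \<le> (\<Sum>A\<in>{P. partition_on J P}. norm (?t A))"
    unfolding G_integral by (rule norm_sum)
  finally show "(\<integral>z. (case z of (ys, vs) \<Rightarrow> \<Prod>j\<in>J. \<Sum>\<gamma>\<in>S. \<bar>w (vs \<gamma>)\<bar> * C) \<partial>iid_law U mu)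
       \<le> (\<Sum>A\<in>{P. partition_on J P}. real (fact (card A) * (card S choose card A))
            * norm (\<Prod>a\<in>A. block_moment U mu (\<lambda>j y. complex_of_real C) (\<lambda>v. \<bar>w v\<bar>) a))"
    by (simp add: G_def norm_mult)
qed

lemma nn_integral_norm_iid_statistic_le:
  assumes S: "finite S"
  shows "(\<integral>\<^sup>+z. norm (case z of (ys, vs) \<Rightarrow> \<Prod>j\<in>J. \<Sum>\<gamma>\<in>S. complex_of_real (w (vs \<gamma>)) * \<phi> j (ys \<gamma>))
            \<partial>iid_law U mu)
       \<le> ennreal (\<Sum>A\<in>{P. partition_on J P}. real (fact (card A) * (card S choose card A))
            * norm (\<Prod>a\<in>A. block_moment U mu (\<lambda>j y. complex_of_real C) (\<lambda>v. \<bar>w v\<bar>) a))"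
    (is "_ \<le> ennreal ?K")
proof -
  define G :: "(nat \<Rightarrow> 'y) \<times> (nat \<Rightarrow> 'm) \<Rightarrow> real" where "G = (\<lambda>(ys, vs). \<Prod>j\<in>J. \<Sum>\<gamma>\<in>S. \<bar>w (vs \<gamma>)\<bar> * C)"
  have "0 \<le> G z" for z
    unfolding G_def using C_nonneg by (auto simp: case_prod_beta' intro!: zero_le_power sum_nonneg)
  have "(\<integral>\<^sup>+z. norm (case z of (ys, vs) \<Rightarrow> \<Prod>j\<in>J. \<Sum>\<gamma>\<in>S. complex_of_real (w (vs \<gamma>)) * \<phi> j (ys \<gamma>))
            \<partial>iid_law U mu) \<le> (\<integral>\<^sup>+z. G z \<partial>iid_law U mu)"
    unfolding G_def using norm_statistic_le by (intro nn_integral_mono) (auto intro: ennreal_leI)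
  also have "\<dots> = ennreal (integral\<^sup>L (iid_law U mu) G)"
    using \<open>0 \<le> G _\<close> integral_dominating_statistic(1)[OF S]
    by (intro nn_integral_eq_integral) (simp_all add: G_def)
  also have "\<dots> \<le> ennreal ?K" using integral_dominating_statistic(2)[OF S] unfolding G_def by (rule ennreal_leI)
  finally show ?thesis .
qed

lemma integrable_poisson_statistic:
  assumes "0 < rate"
  shows "integrable (measure_pmf (poisson_pmf rate) \<Otimes>\<^sub>M iid_law U mu)
           (\<lambda>(m, ys, vs). \<Prod>j\<in>J. \<Sum>\<gamma>\<in>{1..m}. complex_of_real (w (vs \<gamma>)) * \<phi> j (ys \<gamma>))"
    (is "integrable (?P \<Otimes>\<^sub>M ?Q) ?F")
proof -
  define K where "K m = (\<Sum>A\<in>{P. partition_on J P}. real (fact (card A) * (m choose card A))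
      * norm (\<Prod>a\<in>A. block_moment U mu (\<lambda>j y. complex_of_real C) (\<lambda>v. \<bar>w v\<bar>) a))" for m
  interpret Q: prob_space ?Q by (rule prob_space_iid_law[OF prob_U prob_mu])
  have "integrable ?Q (\<lambda>z. ?F (m, z))" for m
    using integral_iid_statistic(1)[of "{1..m}"] by (simp add: case_prod_beta')
  then have F_meas: "?F \<in> borel_measurable (?P \<Otimes>\<^sub>M ?Q)"
    by (intro borel_measurable_pair_measure_pmf) auto
  have K_int: "integrable ?P K"
    unfolding K_def using poisson_factorial_moment(1)[OF assms]
    by (intro Bochner_Integration.integrable_sum integrable_mult_left)
  have "(\<integral>\<^sup>+x. norm (?F x) \<partial>(?P \<Otimes>\<^sub>M ?Q)) = (\<integral>\<^sup>+m. \<integral>\<^sup>+z. norm (?F (m, z)) \<partial>?Q \<partial>?P)"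
    by (rule Q.nn_integral_fst[symmetric]) (use F_meas in measurable)
  also have "\<dots> \<le> (\<integral>\<^sup>+m. K m \<partial>?P)"
    using nn_integral_norm_iid_statistic_le[of "{1.._}"]
    by (intro nn_integral_mono) (simp add: K_def case_prod_beta')
  also have "\<dots> = ennreal (integral\<^sup>L ?P K)"
    by (rule nn_integral_eq_integral[OF K_int]) (simp add: K_def sum_nonneg)
  finally show ?thesis by (intro integrableI_bounded[OF F_meas]) (simp add: top.not_eq_extremum le_less_trans)
qed

lemma integral_poisson_statistic:
  assumes rate: "0 < rate"
  shows "(\<integral>\<omega>. (case \<omega> of (m, ys, vs) \<Rightarrow> \<Prod>j\<in>J. \<Sum>\<gamma>\<in>{1..m}. complex_of_real (w (vs \<gamma>)) * \<phi> j (ys \<gamma>))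
            \<partial>(measure_pmf (poisson_pmf rate) \<Otimes>\<^sub>M iid_law U mu))
       = (\<Sum>A\<in>{P. partition_on J P}. \<Prod>a\<in>A. complex_of_real rate * block_moment U mu \<phi> w a)"
    (is "integral\<^sup>L (?P \<Otimes>\<^sub>M ?Q) ?F = _")
proof -
  interpret Q: prob_space ?Q by (rule prob_space_iid_law[OF prob_U prob_mu])
  interpret PQ: pair_sigma_finite ?P ?Q ..
  have moment: "integrable ?P (\<lambda>m. complex_of_real (real (fact k * (m choose k))))" for k
    by (rule integrable_of_real[OF poisson_factorial_moment(1)[OF rate]])
  have "integral\<^sup>L (?P \<Otimes>\<^sub>M ?Q) ?F = (\<integral>m. (\<integral>z. ?F (m, z) \<partial>?Q) \<partial>?P)"
    by (rule PQ.integral_fst'[OF integrable_poisson_statistic[OF rate], symmetric])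
  also have "\<dots> = (\<integral>m. (\<Sum>A\<in>{P. partition_on J P}. complex_of_real (real (fact (card A) * (m choose card A)))
      * (\<Prod>a\<in>A. block_moment U mu \<phi> w a)) \<partial>?P)"
    using integral_iid_statistic(2) by (simp add: case_prod_beta')
  also have "\<dots> = (\<Sum>A\<in>{P. partition_on J P}. \<integral>m. complex_of_real (real (fact (card A) * (m choose card A)))
      * (\<Prod>a\<in>A. block_moment U mu \<phi> w a) \<partial>?P)"
    using moment by (intro Bochner_Integration.integral_sum integrable_mult_left)
  also have "\<dots> = (\<Sum>A\<in>{P. partition_on J P}.
      complex_of_real (\<integral>m. real (fact (card A) * (m choose card A)) \<partial>?P) * (\<Prod>a\<in>A. block_moment U mu \<phi> w a))"
    by (simp only: integral_mult_left_zero integral_complex_of_real)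
  also have "\<dots> = (\<Sum>A\<in>{P. partition_on J P}. \<Prod>a\<in>A. complex_of_real rate * block_moment U mu \<phi> w a)"
    unfolding poisson_factorial_moment(2)[OF rate] by (simp add: prod.distrib)
  finally show ?thesis .
qed

end

section \<open>The random potential\<close>

lemma schwartz_continuous: "schwartz f \<Longrightarrow> continuous_on UNIV f"
  unfolding schwartz_def by (drule spec[of _ "[]"]) simp

lemma schwartz_bounded:
  assumes "schwartz f"
  shows "bounded (range f)"
proof -
  have "bounded (range (\<lambda>x. (1 + norm x) ^ 0 * iter_partial [] f x))"
    using assms unfolding schwartz_def by blast
  then show ?thesis by simp
qed

lemma Vhat_eq_sum:
  fixes B :: "real^'d \<Rightarrow> real"
  assumes L: "L > 0" and q: "q \<in> dual_lattice L"
    and [measurable]: "B \<in> borel_measurable borel" and bounded: "\<And>x. \<bar>B x\<bar> \<le> C"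
  shows "Vhat L B m ys vs q = (\<Sum>\<gamma>\<in>{1..m}. complex_of_real (vs \<gamma>)
           * (four_char q (ys \<gamma>) * four_coef L (\<lambda>x. complex_of_real (per_ext L B x)) q))"
proof -
  define f where "f = per_ext L (\<lambda>x. complex_of_real (B x))"
  have f_eq: "(\<lambda>x. complex_of_real (per_ext L B x)) = f" unfolding f_def per_ext_def ..
  have f_meas [measurable]: "f \<in> borel_measurable borel" unfolding f_def by measurable
  have f_bounded: "norm (f x) \<le> C" for x unfolding f_def using bounded by (intro norm_per_ext_le) simp
  have f_periodic: "lattice_periodic L f" unfolding f_def using L by (simp add: lattice_periodic_per_ext)
  have integrable:
    "set_integrable lborel (box_L L) (\<lambda>x. complex_of_real (vs \<gamma>) * (four_char q x * f (x - ys \<gamma>)))" for \<gamma>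
    using f_bounded
    by (intro set_integrable_box_L_bounded[where C = "\<bar>vs \<gamma>\<bar> * C"]) (auto simp: norm_mult mult_left_mono)
  have "Vhat L B m ys vs q
      = (LINT x : box_L L | lborel. \<Sum>\<gamma>\<in>{1..m}. complex_of_real (vs \<gamma>) * (four_char q x * f (x - ys \<gamma>)))"
    unfolding Vhat_def four_coef_eq_set_integral f_eq[symmetric]
    by (simp add: of_real_sum sum_distrib_left algebra_simps)
  also have "\<dots> = (\<Sum>\<gamma>\<in>{1..m}. LINT x : box_L L | lborel. complex_of_real (vs \<gamma>) * (four_char q x * f (x - ys \<gamma>)))"
    unfolding set_lebesgue_integral_def scaleR_sum_right
    by (rule Bochner_Integration.integral_sum) (use integrable in \<open>simp add: set_integrable_def\<close>)
  also have "\<dots> = (\<Sum>\<gamma>\<in>{1..m}. complex_of_real (vs \<gamma>) * four_coef L (\<lambda>x. f (x - ys \<gamma>)) q)"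
    unfolding four_coef_eq_set_integral by simp
  also have "\<dots> = (\<Sum>\<gamma>\<in>{1..m}. complex_of_real (vs \<gamma>) * (four_char q (ys \<gamma>) * four_coef L f q))"
    using four_coef_translate[OF L q f_meas f_bounded f_periodic] by simp
  finally show ?thesis unfolding f_eq .
qed

lemma marked_statistic_uniform_box:
  fixes q :: "'j \<Rightarrow> real^'d" and c :: "'j \<Rightarrow> complex" and mu :: "real measure"
  assumes "L > 0" and "prob_space mu" and "sets mu = sets borel"
    and "\<And>k. integrable mu (\<lambda>v. v ^ k)" and "finite J"
  shows "marked_statistic (uniform_measure lborel (box_L L)) mu (\<lambda>j y. four_char (q j) y * c j) (\<lambda>v. v)
           J (\<Sum>j\<in>J. norm (c j))"
proof (rule marked_statistic.intro)
  show "prob_space (uniform_measure lborel (box_L L :: (real^'d) set))"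
    using assms(1) by (intro prob_space_uniform_measure) (simp_all add: emeasure_box_L)
  show "(\<lambda>v. v) \<in> borel_measurable mu" unfolding measurable_cong_sets[OF assms(3) refl] by simp
  show "norm (four_char (q j) y * c j) \<le> (\<Sum>j\<in>J. norm (c j))" if "j \<in> J" for j y
    using that assms(5) by (simp add: norm_mult member_le_sum[where f = "\<lambda>j. norm (c j)"])
qed (use assms in \<open>simp_all add: sum_nonneg\<close>)

lemma block_moment_uniform_box:
  fixes q :: "'j \<Rightarrow> real^'d"
  assumes L: "L > 0" and a: "finite a" and q: "\<And>j. j \<in> a \<Longrightarrow> q j \<in> dual_lattice L"
  shows "complex_of_real (L ^ CARD('d))
           * block_moment (uniform_measure lborel (box_L L)) mu (\<lambda>j y. four_char (q j) y * c j) (\<lambda>v. v) a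
       = complex_of_real (moment mu (card a)) * delta_L L TYPE('d) (\<Sum>j\<in>a. q j) * (\<Prod>j\<in>a. c j)"
proof -
  have "(\<integral>y. (\<Prod>j\<in>a. four_char (q j) y * c j) \<partial>uniform_measure lborel (box_L L))
      = (1 / L ^ CARD('d)) *\<^sub>R (LINT y : box_L L | lborel. four_char (\<Sum>j\<in>a. q j) y * (\<Prod>j\<in>a. c j))"
    using L by (simp add: integral_uniform_measure emeasure_box_L measure_box_L prod.distrib prod_four_char[OF a])
  also have "\<dots> = (1 / L ^ CARD('d)) *\<^sub>R (delta_L L TYPE('d) (\<Sum>j\<in>a. q j) * (\<Prod>j\<in>a. c j))"
    using set_integral_box_four_char[OF L dual_lattice_sum[of a q, OF q]] by simp
  finally show ?thesis
    using L unfolding block_moment_def moment_def by (simp add: scaleR_conv_of_real)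
qed

theorem integral_prod_Vhat:
  fixes B :: "real^'d \<Rightarrow> real" and mu :: "real measure" and q :: "'j \<Rightarrow> real^'d"
  assumes L: "L > 0" and [measurable]: "B \<in> borel_measurable borel" and bounded: "\<And>x. \<bar>B x\<bar> \<le> C"
    and "prob_space mu" and "sets mu = sets borel" and "\<And>k. integrable mu (\<lambda>v. v ^ k)"
    and "finite J" and q: "\<And>j. j \<in> J \<Longrightarrow> q j \<in> dual_lattice L"
  shows "(\<integral>\<omega>. (case \<omega> of (m, ys, vs) \<Rightarrow> \<Prod>j\<in>J. Vhat L B m ys vs (q j)) \<partial>joint_law L TYPE('d) mu)
       = (\<Sum>A\<in>{P. partition_on J P}. \<Prod>a\<in>A. complex_of_real (moment mu (card a))
            * delta_L L TYPE('d) (\<Sum>l\<in>a. q l)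
            * (\<Prod>l\<in>a. four_coef L (\<lambda>x. complex_of_real (per_ext L B x)) (q l)))"
proof -
  define Bh where "Bh j = four_coef L (\<lambda>x. complex_of_real (per_ext L B x)) (q j)" for j
  define U where "U = uniform_measure lborel (box_L L :: (real^'d) set)"
  interpret marked_statistic U mu "\<lambda>j y. four_char (q j) y * Bh j" "\<lambda>v. v" J "\<Sum>j\<in>J. norm (Bh j)"
    unfolding U_def using assms(4-7) by (rule marked_statistic_uniform_box[OF L])
  have "joint_law L TYPE('d) mu = measure_pmf (poisson_pmf (L ^ CARD('d))) \<Otimes>\<^sub>M iid_law U mu"
    unfolding joint_law_def iid_law_def vol_L_def U_def ..
  moreover have "(\<Prod>j\<in>J. Vhat L B m ys vs (q j))
      = (\<Prod>j\<in>J. \<Sum>\<gamma>\<in>{1..m}. complex_of_real (vs \<gamma>) * (four_char (q j) (ys \<gamma>) * Bh j))" for m ys vs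
    using Vhat_eq_sum[OF L q _ bounded] unfolding Bh_def by simp
  ultimately have "(\<integral>\<omega>. (case \<omega> of (m, ys, vs) \<Rightarrow> \<Prod>j\<in>J. Vhat L B m ys vs (q j)) \<partial>joint_law L TYPE('d) mu)
      = (\<Sum>A\<in>{P. partition_on J P}. \<Prod>a\<in>A. complex_of_real (L ^ CARD('d))
            * block_moment U mu (\<lambda>j y. four_char (q j) y * Bh j) (\<lambda>v. v) a)"
    using integral_poisson_statistic[of "L ^ CARD('d)"] L by simp
  also have "\<dots> = (\<Sum>A\<in>{P. partition_on J P}. \<Prod>a\<in>A. complex_of_real (moment mu (card a))
            * delta_L L TYPE('d) (\<Sum>l\<in>a. q l) * (\<Prod>l\<in>a. Bh l))"
  proof (intro sum.cong prod.cong refl)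
    fix A a assume "A \<in> {P. partition_on J P}" and "a \<in> A"
    then have "a \<subseteq> J" by (auto simp: partition_on_def)
    then show "complex_of_real (L ^ CARD('d)) * block_moment U mu (\<lambda>j y. four_char (q j) y * Bh j) (\<lambda>v. v) a
        = complex_of_real (moment mu (card a)) * delta_L L TYPE('d) (\<Sum>l\<in>a. q l) * (\<Prod>l\<in>a. Bh l)"
      unfolding U_def using q finite_subset[OF _ \<open>finite J\<close>] by (intro block_moment_uniform_box[OF L]) auto
  qed
  finally show ?thesis unfolding Bh_def .
qed

theorem lemma5:
  fixes L :: real and n :: nat and B :: "real^'d \<Rightarrow> real"
    and mu :: "real measure" and p :: "nat \<Rightarrow> real^'d"
  assumes "L > 0"
    and "schwartz B"
    and "prob_space mu" and "sets mu = sets borel"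
    and "\<forall>k::nat. integrable mu (\<lambda>v. v ^ k)"
    and "\<forall>j\<in>{1..n+1}. p j \<in> dual_lattice L"
  shows "(\<integral>\<omega>. (case \<omega> of (m, ys, vs) \<Rightarrow>
              \<Prod>j\<in>{1..n}. Vhat L B m ys vs (p j - p (Suc j)))
            \<partial>joint_law L TYPE('d) mu)
       = (\<Sum>A\<in>{P. partition_on {1..n} P}.
            \<Prod>a\<in>A. complex_of_real (moment mu (card a))
                  * delta_L L TYPE('d) (\<Sum>l\<in>a. p l - p (Suc l))
                  * (\<Prod>l\<in>a. four_coef L (\<lambda>x. complex_of_real (per_ext L B x)) (p l - p (Suc l))))"
proof -
  obtain C where C: "\<And>x. \<bar>B x\<bar> \<le> C"
    using schwartz_bounded[OF assms(2)] by (auto simp: bounded_iff)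
  have B: "B \<in> borel_measurable borel"
    by (rule borel_measurable_continuous_onI[OF schwartz_continuous[OF assms(2)]])
  have q: "p j - p (Suc j) \<in> dual_lattice L" if "j \<in> {1..n}" for j
    using assms(6) that by (intro dual_lattice_diff) auto
  show ?thesis
    by (rule integral_prod_Vhat[OF assms(1) B C assms(3,4) assms(5)[rule_format] finite_atLeastAtMost q])
qed

end
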